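(* Let $N\geq 2$ and $n\geq 1$ be integers. For a map $u=(u_1,\dots,u_N)^\top\in C^\infty(U)^N$ on an open set $U\subseteq\mathbb{R}^n$, write $Du\otimes Du:D^2u$ for the $\mathbb{R}^N$-valued function whose $\alpha$-th component is \[ \sum_{i,j=1}^n\sum_{\beta=1}^N D_iu_\alpha\, D_ju_\beta\, D^2_{ij}u_\beta ,\qquad \alpha=1,\dots,N . \] Then: (a) There exist a vector $\xi\in\mathbb{R}^N$, a map $u^1\in C^\infty(\mathbb{R}^n)^N$ with $Du^1\otimes Du^1:D^2u^1=0$ on $\mathbb{R}^n$, and open sets $\Omega^+,\Omega^-\subseteq\mathbb{R}^n$ such that \[ \sup_{\Omega^+}\xi\cdot u^1\;>\;\max_{\partial\Omega^+}\xi\cdot u^1 \qquad\text{and}\qquad \inf_{\Omega^-}\xi\cdot u^1\;<\;\min_{\partial\Omega^-}\xi\cdot u^1 , \] i.e. the projection $\xi\cdot u^1$ satisfies neither the Maximum nor the Minimum Principle. (b) There exists a map $u^2\in C^\infty(\mathbb{R}^n\setminus\{0\})^N$ with $Du^2\otimes Du^2:D^2u^2=0$ on $\mathbb{R}^n\setminus\{0\}$, and a bounded open set $\Omega$ whose closure is contained in $\mathbb{R}^n\setminus\{0\}$, such that \[ u^2(\Omega)\not\subseteq \overline{\mathrm{co}}\big(u^2(\partial\Omega)\big), \] where $\overline{\mathrm{co}}(A)$ denotes the closed convex hull of $A\subseteq\mathbb{R}^N$.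
   Context: $D_i=\partial/\partial x_i$, $D^2_{ij}=\partial^2/\partial x_i\partial x_j$, and $\xi\cdot u=\sum_\alpha \xi_\alpha u_\alpha$ is the Euclidean inner product in $\mathbb{R}^N$. The system $Du\otimes Du:D^2u=0$ is the tangential part of the $\infty$-Laplace system. *)

theory Defs
  imports "HOL-Analysis.Analysis"
begin

definition partial :: "'n::finite \<Rightarrow> (real^'n \<Rightarrow> real^'m) \<Rightarrow> real^'n \<Rightarrow> real^'m" where
  "partial i f x = frechet_derivative f (at x) (axis i 1)"

fun dpart :: "'n::finite list \<Rightarrow> (real^'n \<Rightarrow> real^'m) \<Rightarrow> real^'n \<Rightarrow> real^'m" where
  "dpart [] f = f"
| "dpart (i # is) f = partial i (dpart is f)"

definition smooth_on :: "(real^'n::finite) set \<Rightarrow> (real^'n \<Rightarrow> real^'m) \<Rightarrow> bool" where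
  "smooth_on U f \<longleftrightarrow> (\<forall>is. \<forall>x\<in>U. dpart is f differentiable (at x))"

definition tang_inf_lap :: "(real^'n::finite \<Rightarrow> real^'m::finite) \<Rightarrow> real^'n \<Rightarrow> real^'m" where
  "tang_inf_lap u x = (\<chi> \<alpha>. \<Sum>i\<in>UNIV. \<Sum>j\<in>UNIV. \<Sum>\<beta>\<in>UNIV.
      (partial i u x $ \<alpha>) * (partial j u x $ \<beta>) * (partial i (partial j u) x $ \<beta>))"

end

theory Submission
  imports Defs
begin

text \<open>
  For distinct coordinate directions \<open>a, b\<close> take \<open>u(x) = \<Sum>\<^sub>k (cos x\<^sub>k e\<^sub>a + sin x\<^sub>k e\<^sub>b)\<close>.
  Each partial derivative \<open>D\<^sub>j u = - sin x\<^sub>j e\<^sub>a + cos x\<^sub>j e\<^sub>b\<close> has constant length, so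
  \<open>D\<^sub>j u \<bullet> D\<^sub>i D\<^sub>j u = 0\<close> and the tangential \<open>\<infinity>\<close>-Laplacian vanishes identically.
  The projection \<open>e\<^sub>a \<bullet> u = \<Sum>\<^sub>k cos x\<^sub>k\<close>, however, has a strict local maximum at every
  point of \<open>2\<pi>\<int>\<^sup>n\<close> and a strict local minimum at every point of \<open>\<pi> + 2\<pi>\<int>\<^sup>n\<close>.
  Small balls around such points violate the maximum and the minimum principle, and
  around \<open>(2\<pi>, \<dots>, 2\<pi>)\<close> the value \<open>u(2\<pi>, \<dots>, 2\<pi>)\<close> is separated from the convex
  hull of the boundary values by the hyperplane orthogonal to \<open>e\<^sub>a\<close>.
\<close>

definition trig_map :: "('n::finite \<Rightarrow> real^'m) \<Rightarrow> ('n \<Rightarrow> real^'m) \<Rightarrow> real^'n \<Rightarrow> real^'m" where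
  "trig_map A B x = (\<Sum>k\<in>UNIV. cos (x$k) *\<^sub>R A k + sin (x$k) *\<^sub>R B k)"

lemma has_derivative_vec_nth: "((\<lambda>x. x $ k) has_derivative (\<lambda>h. h $ k)) F"
  by (rule bounded_linear_imp_has_derivative[OF bounded_linear_vec_nth])

lemma has_derivative_trig_map:
  "(trig_map A B has_derivative
     (\<lambda>h. \<Sum>k\<in>UNIV. (- sin (x$k) * h$k) *\<^sub>R A k + (cos (x$k) * h$k) *\<^sub>R B k)) (at x)"
  unfolding trig_map_def
  by (rule has_derivative_sum)
     (auto intro!: derivative_eq_intros has_derivative_vec_nth simp: algebra_simps)

lemma partial_trig_map_apply:
  "partial i (trig_map A B) x = - sin (x$i) *\<^sub>R A i + cos (x$i) *\<^sub>R B i"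
proof -
  have "partial i (trig_map A B) x
      = (\<Sum>k\<in>UNIV. (- sin (x$k) * axis i 1 $ k) *\<^sub>R A k + (cos (x$k) * axis i 1 $ k) *\<^sub>R B k)"
    unfolding partial_def by (subst frechet_derivative_at[OF has_derivative_trig_map, symmetric]) (rule refl)
  also have "\<dots> = (\<Sum>k\<in>UNIV. if k = i then - sin (x$i) *\<^sub>R A i + cos (x$i) *\<^sub>R B i else 0)"
    by (rule sum.cong) (simp_all add: axis_def)
  finally show ?thesis by simp
qed

lemma partial_trig_map:
  "partial i (trig_map A B)
     = trig_map (\<lambda>k. if k = i then B i else 0) (\<lambda>k. if k = i then - A i else 0)"
proof
  fix x
  have "trig_map (\<lambda>k. if k = i then B i else 0) (\<lambda>k. if k = i then - A i else 0) x
      = (\<Sum>k\<in>UNIV. if k = i then - sin (x$i) *\<^sub>R A i + cos (x$i) *\<^sub>R B i else 0)"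
    unfolding trig_map_def by (rule sum.cong) simp_all
  then show "partial i (trig_map A B) x
      = trig_map (\<lambda>k. if k = i then B i else 0) (\<lambda>k. if k = i then - A i else 0) x"
    by (simp add: partial_trig_map_apply)
qed

lemma partial_partial_trig_map_apply:
  "partial i (partial j (trig_map A B)) x
     = (if i = j then - cos (x$j) *\<^sub>R A j - sin (x$j) *\<^sub>R B j else 0)"
  unfolding partial_trig_map[of j] by (simp add: partial_trig_map_apply)

lemma dpart_trig_map: "\<exists>A' B'. dpart is (trig_map A B) = trig_map A' B'"
proof (induction "is")
  case Nil
  then show ?case by auto
next
  case (Cons i "is")
  then obtain A' B' where "dpart is (trig_map A B) = trig_map A' B'" by blast
  then show ?case by (intro exI) (simp add: partial_trig_map)
qed

lemma smooth_on_trig_map: "smooth_on U (trig_map A B)"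
  unfolding smooth_on_def
proof (intro allI ballI)
  fix "is" x
  obtain A' B' where dpart_eq: "dpart is (trig_map A B) = trig_map A' B'"
    using dpart_trig_map by blast
  show "dpart is (trig_map A B) differentiable (at x)"
    unfolding dpart_eq differentiable_def using has_derivative_trig_map by blast
qed

lemma tang_inf_lap_eq_0_if_orthogonal:
  assumes "\<And>i j. partial j u x \<bullet> partial i (partial j u) x = 0"
  shows "tang_inf_lap u x = 0"
proof -
  have "(\<Sum>\<beta>\<in>UNIV. (partial i u x $ \<alpha>) * (partial j u x $ \<beta>) * (partial i (partial j u) x $ \<beta>))
      = (partial i u x $ \<alpha>) * (partial j u x \<bullet> partial i (partial j u) x)" for i j \<alpha>
    by (simp add: inner_vec_def sum_distrib_left mult.assoc)
  then show ?thesis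
    unfolding tang_inf_lap_def by (simp add: assms vec_eq_iff)
qed

lemma tang_inf_lap_trig_map:
  assumes "\<And>k. A k \<bullet> B k = 0" and "\<And>k. norm (A k) = norm (B k)"
  shows "tang_inf_lap (trig_map A B) x = 0"
proof (rule tang_inf_lap_eq_0_if_orthogonal)
  fix i j
  have "B j \<bullet> B j = A j \<bullet> A j"
    using assms(2)[of j] by (simp add: dot_square_norm)
  then show "partial j (trig_map A B) x \<bullet> partial i (partial j (trig_map A B)) x = 0"
    using assms(1)[of j]
    by (simp add: partial_trig_map_apply partial_partial_trig_map_apply inner_commute
                  inner_add_left inner_diff_right algebra_simps)
qed

lemma inner_axis_trig_map_axis:
  fixes a b :: "'m::finite"
  assumes "a \<noteq> b"
  shows "axis a 1 \<bullet> trig_map (\<lambda>k. axis a 1) (\<lambda>k. axis b 1) z = (\<Sum>k\<in>UNIV. cos (z$k))"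
  using assms by (simp add: trig_map_def inner_sum_right inner_add_right inner_axis_axis)

lemma cos_less_one:
  fixes d :: real
  assumes "d \<noteq> 0" and "\<bar>d\<bar> < 2 * pi"
  shows "cos d < 1"
proof (rule ccontr)
  assume "\<not> cos d < 1"
  then have "cos d = 1" using cos_le_one[of d] by linarith
  then obtain n :: int where "d = real_of_int n * 2 * pi"
    using cos_one_2pi_int by blast
  with assms have "n \<noteq> 0" and "\<bar>real_of_int n\<bar> < 1"
    by (auto simp: abs_mult)
  then show False by linarith
qed

lemma sum_cos_less_card:
  fixes x :: "real^'n::finite"
  assumes "x \<noteq> 0" and "norm x < 2 * pi"
  shows "(\<Sum>k\<in>UNIV. cos (x$k)) < real CARD('n)"
proof -
  obtain k where "x$k \<noteq> 0"
    using assms(1) by (auto simp: vec_eq_iff)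
  moreover have "\<bar>x$k\<bar> < 2 * pi"
    using component_le_norm_cart[of x k] assms(2) by linarith
  ultimately have "cos (x$k) < 1"
    by (rule cos_less_one)
  then have "(\<Sum>k\<in>UNIV. cos (x$k)) < (\<Sum>k\<in>(UNIV::'n set). 1)"
    by (intro sum_strict_mono_ex1) auto
  then show ?thesis by simp
qed

text \<open>As \<open>cos t = \<plusminus>1\<close>, the factor \<open>cos t\<close> makes this a strict maximum at \<open>(t, \<dots>, t)\<close>
  when \<open>cos t = 1\<close> and a strict minimum when \<open>cos t = -1\<close>.\<close>

lemma sum_cos_strict_extremum:
  fixes z :: "real^'n::finite"
  assumes "sin t = 0" and "0 < r" and "r < 2 * pi" and "z \<in> sphere (\<chi> k. t) r"
  shows "cos t * (\<Sum>k\<in>UNIV. cos (z$k)) < cos t * (\<Sum>k\<in>UNIV. cos ((\<chi> k. t :: real^'n)$k))"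
proof -
  define x where "x = z - (\<chi> k. t)"
  have cos_sq: "cos t * cos t = 1"
    using sin_cos_squared_add[of t] assms(1) by (simp add: power2_eq_square)
  have "cos (z$k) = cos t * cos (x$k)" for k
    using cos_add[of t "x$k"] assms(1) by (simp add: x_def)
  then have "cos t * (\<Sum>k\<in>UNIV. cos (z$k)) = (\<Sum>k\<in>UNIV. cos (x$k))"
    by (simp add: sum_distrib_left mult.assoc[symmetric] cos_sq)
  also have "\<dots> < real CARD('n)"
    using assms(2-4) by (intro sum_cos_less_card) (auto simp: x_def dist_norm norm_minus_commute)
  also have "\<dots> = cos t * (\<Sum>k\<in>UNIV. cos ((\<chi> k. t :: real^'n)$k))"
    by (simp add: mult.assoc[symmetric] cos_sq)
  finally show ?thesis .
qed

lemma frontier_ball_max_less_centre: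
  fixes f :: "'a::euclidean_space \<Rightarrow> real"
  assumes "continuous_on (sphere c r) f" and "0 < r" and "\<And>z. z \<in> sphere c r \<Longrightarrow> f z < f c"
  obtains y where "y \<in> frontier (ball c r)" and "\<forall>z\<in>frontier (ball c r). f z \<le> f y" and "f y < f c"
proof -
  obtain y where "y \<in> sphere c r" and "\<forall>z\<in>sphere c r. f z \<le> f y"
    using continuous_attains_sup[OF compact_sphere _ assms(1)] assms(2) by auto
  then show ?thesis
    using that assms(2,3) frontier_ball[of r c] by auto
qed

lemma maximum_principle_fails_at_strict_max:
  fixes f :: "'a::euclidean_space \<Rightarrow> real"
  assumes "continuous_on (sphere c r) f" and "0 < r" and "\<And>z. z \<in> sphere c r \<Longrightarrow> f z < f c"
  shows "\<exists>y\<in>frontier (ball c r). (\<forall>z\<in>frontier (ball c r). f z \<le> f y) \<and> (\<exists>x\<in>ball c r. f x > f y)"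
proof -
  obtain y where "y \<in> frontier (ball c r)" "\<forall>z\<in>frontier (ball c r). f z \<le> f y" "f y < f c"
    using frontier_ball_max_less_centre[OF assms] .
  moreover have "c \<in> ball c r"
    using assms(2) by simp
  ultimately show ?thesis
    by blast
qed

lemma minimum_principle_fails_at_strict_min:
  fixes f :: "'a::euclidean_space \<Rightarrow> real"
  assumes "continuous_on (sphere c r) f" and "0 < r" and "\<And>z. z \<in> sphere c r \<Longrightarrow> f c < f z"
  shows "\<exists>y\<in>frontier (ball c r). (\<forall>z\<in>frontier (ball c r). f z \<ge> f y) \<and> (\<exists>x\<in>ball c r. f x < f y)"
  using maximum_principle_fails_at_strict_max[of c r "\<lambda>x. - f x"] assms
  by (simp add: continuous_on_minus)

lemma closure_convex_hull_subset_halfspace: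
  assumes "\<And>v. v \<in> S \<Longrightarrow> \<xi> \<bullet> v \<le> b"
  shows "closure (convex hull S) \<subseteq> {v. \<xi> \<bullet> v \<le> b}"
  using assms
  by (intro closure_minimal hull_minimal convex_halfspace_le closed_halfspace_le) auto

lemma not_subset_closure_convex_hull_frontier:
  fixes u :: "'a::euclidean_space \<Rightarrow> 'b::real_inner"
  assumes "continuous_on (sphere c r) (\<lambda>z. \<xi> \<bullet> u z)" and "0 < r"
    and "\<And>z. z \<in> sphere c r \<Longrightarrow> \<xi> \<bullet> u z < \<xi> \<bullet> u c"
  shows "\<not> u ` ball c r \<subseteq> closure (convex hull (u ` frontier (ball c r)))"
proof -
  obtain y where "\<forall>z\<in>frontier (ball c r). \<xi> \<bullet> u z \<le> \<xi> \<bullet> u y" and "\<xi> \<bullet> u y < \<xi> \<bullet> u c"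
    using frontier_ball_max_less_centre[OF assms] by blast
  then have "u c \<notin> closure (convex hull (u ` frontier (ball c r)))"
    using closure_convex_hull_subset_halfspace[of "u ` frontier (ball c r)" \<xi> "\<xi> \<bullet> u y"] by fastforce
  moreover have "u c \<in> u ` ball c r"
    using assms(2) by simp
  ultimately show ?thesis
    by blast
qed

lemma closure_ball_subset_Compl_0:
  fixes c :: "'a::real_normed_vector"
  assumes "r < norm c"
  shows "closure (ball c r) \<subseteq> - {0}"
proof -
  have "closure (ball c r) \<subseteq> cball c r"
    by (intro closure_minimal ball_subset_cball closed_cball)
  then show ?thesis
    using assms by (auto simp: dist_norm)
qed

lemma two_distinct_elements:
  assumes "CARD('a::finite) \<ge> 2"
  shows "\<exists>a b :: 'a. a \<noteq> b"
  using assms by (meson card_2_iff' ex_card)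

theorem mainTheorem1:
  assumes "CARD('N::finite) \<ge> 2"
  shows
   "(\<exists>(\<xi>::real^'N) (u1::real^'n::finite \<Rightarrow> real^'N) \<Omega>p \<Omega>m.
        smooth_on UNIV u1 \<and> (\<forall>x. tang_inf_lap u1 x = 0) \<and>
        open \<Omega>p \<and> bounded \<Omega>p \<and> open \<Omega>m \<and> bounded \<Omega>m \<and>
        (\<exists>y\<in>frontier \<Omega>p. (\<forall>z\<in>frontier \<Omega>p. \<xi> \<bullet> u1 z \<le> \<xi> \<bullet> u1 y) \<and>
                          (\<exists>x\<in>\<Omega>p. \<xi> \<bullet> u1 x > \<xi> \<bullet> u1 y)) \<and>
        (\<exists>y\<in>frontier \<Omega>m. (\<forall>z\<in>frontier \<Omega>m. \<xi> \<bullet> u1 z \<ge> \<xi> \<bullet> u1 y) \<and>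
                          (\<exists>x\<in>\<Omega>m. \<xi> \<bullet> u1 x < \<xi> \<bullet> u1 y)))
    \<and>
    (\<exists>(u2::real^'n \<Rightarrow> real^'N) \<Omega>.
        smooth_on (- {0}) u2 \<and> (\<forall>x. x \<noteq> 0 \<longrightarrow> tang_inf_lap u2 x = 0) \<and>
        open \<Omega> \<and> bounded \<Omega> \<and> closure \<Omega> \<subseteq> - {0} \<and>
        \<not> (u2 ` \<Omega> \<subseteq> closure (convex hull (u2 ` frontier \<Omega>))))"
proof -
  obtain a b :: 'N where "a \<noteq> b"
    using two_distinct_elements[OF assms] by blast
  define u :: "real^'n \<Rightarrow> real^'N" where "u = trig_map (\<lambda>k. axis a 1) (\<lambda>k. axis b 1)"
  define \<xi> :: "real^'N" where "\<xi> = axis a 1"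
  define diag :: "real \<Rightarrow> real^'n" where "diag t = (\<chi> k. t)" for t
  have smooth: "smooth_on U u" for U
    unfolding u_def by (rule smooth_on_trig_map)
  have tang: "tang_inf_lap u x = 0" for x
    unfolding u_def using \<open>a \<noteq> b\<close> by (intro tang_inf_lap_trig_map) (simp_all add: inner_axis_axis)
  have \<xi>_u: "\<xi> \<bullet> u z = (\<Sum>k\<in>UNIV. cos (z$k))" for z
    unfolding \<xi>_def u_def using \<open>a \<noteq> b\<close> by (rule inner_axis_trig_map_axis)
  have cont: "continuous_on S (\<lambda>z. \<xi> \<bullet> u z)" for S
    unfolding \<xi>_u by (intro continuous_intros)
  have "\<exists>y\<in>frontier (ball (diag 0) 1). (\<forall>z\<in>frontier (ball (diag 0) 1). \<xi> \<bullet> u z \<le> \<xi> \<bullet> u y) \<and>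
          (\<exists>x\<in>ball (diag 0) 1. \<xi> \<bullet> u x > \<xi> \<bullet> u y)"
    by (rule maximum_principle_fails_at_strict_max[OF cont])
       (use sum_cos_strict_extremum[where 'n='n, of 0 1] pi_gt3 in \<open>simp_all add: \<xi>_u diag_def\<close>)
  moreover have "\<exists>y\<in>frontier (ball (diag pi) 1). (\<forall>z\<in>frontier (ball (diag pi) 1). \<xi> \<bullet> u z \<ge> \<xi> \<bullet> u y) \<and>
          (\<exists>x\<in>ball (diag pi) 1. \<xi> \<bullet> u x < \<xi> \<bullet> u y)"
    by (rule minimum_principle_fails_at_strict_min[OF cont])
       (use sum_cos_strict_extremum[where 'n='n, of pi 1] pi_gt3 in \<open>fastforce simp: \<xi>_u diag_def\<close>)+
  moreover have "\<not> u ` ball (diag (2 * pi)) 1 \<subseteq> closure (convex hull (u ` frontier (ball (diag (2 * pi)) 1)))"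
    by (rule not_subset_closure_convex_hull_frontier[OF cont])
       (use sum_cos_strict_extremum[where 'n='n, of "2 * pi" 1] pi_gt3 in \<open>simp_all add: \<xi>_u diag_def\<close>)
  moreover have "closure (ball (diag (2 * pi)) 1) \<subseteq> - {0}"
    using component_le_norm_cart[of "diag (2 * pi)"] pi_gt3
    by (intro closure_ball_subset_Compl_0) (simp add: diag_def)
  ultimately show ?thesis
    apply (intro conjI)
     apply (rule exI[of _ \<xi>], rule exI[of _ u], rule exI[of _ "ball (diag 0) 1"],
            rule exI[of _ "ball (diag pi) 1"])
     apply (simp add: smooth tang)
    apply (rule exI[of _ u], rule exI[of _ "ball (diag (2 * pi)) 1"])
    apply (simp add: smooth tang)
    done
qed

end
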